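(* Let $G$ be a torsion-free nilpotent group with Hirsch length $h$, and let $x_1,\ldots,x_h$ be a generating set of $G$ such that every $g\in G$ can be written uniquely as $g=x_1^{\ell_1}\cdots x_h^{\ell_h}$ with $\ell_i\in\mathbb{Z}$, and $[x_i,x_j]\in\langle x_{j+1},\ldots,x_h\rangle$ whenever $1\le i<j\le h$. Suppose further that for some positive integers $q_1,\ldots,q_h$ the set $H=\{x_1^{q_1\ell_1}\cdots x_h^{q_h\ell_h}:\ell_i\in\mathbb{Z}\}$ is a subgroup of $G$. Then the set $X=\{x_1^{k_1}\cdots x_h^{k_h}:0\le k_i<q_i\}$ contains exactly one element from each left coset $gH$ of $H$ in $G$.
   Context: $[x,y]=x^{-1}y^{-1}xy$. *)

theory Defs
  imports "HOL-Algebra.Algebra"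
begin

definition gcomm :: "('a, 'b) monoid_scheme \<Rightarrow> 'a \<Rightarrow> 'a \<Rightarrow> 'a" where
  "gcomm G a b = inv\<^bsub>G\<^esub> a \<otimes>\<^bsub>G\<^esub> inv\<^bsub>G\<^esub> b \<otimes>\<^bsub>G\<^esub> a \<otimes>\<^bsub>G\<^esub> b"

fun lower_central :: "('a, 'b) monoid_scheme \<Rightarrow> nat \<Rightarrow> 'a set" where
  "lower_central G 0 = carrier G"
| "lower_central G (Suc n) =
     generate G {gcomm G a b | a b. a \<in> lower_central G n \<and> b \<in> carrier G}"

definition nilpotent_group :: "('a, 'b) monoid_scheme \<Rightarrow> bool" where
  "nilpotent_group G \<longleftrightarrow> group G \<and> (\<exists>n. lower_central G n = {\<one>\<^bsub>G\<^esub>})"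

definition torsion_free :: "('a, 'b) monoid_scheme \<Rightarrow> bool" where
  "torsion_free G \<longleftrightarrow>
     (\<forall>g\<in>carrier G. g \<noteq> \<one>\<^bsub>G\<^esub> \<longrightarrow> (\<forall>n::nat. n > 0 \<longrightarrow> g [^]\<^bsub>G\<^esub> n \<noteq> \<one>\<^bsub>G\<^esub>))"

text \<open>G has Hirsch length h: there is a subnormal series
  G = S_0 \<ge> S_1 \<ge> ... \<ge> S_n = 1 with cyclic factors, exactly h of which are infinite.
  (For polycyclic groups this number is an invariant.)\<close>
definition hirsch_length :: "('a, 'b) monoid_scheme \<Rightarrow> nat \<Rightarrow> bool" where
  "hirsch_length G h \<longleftrightarrow>
    (\<exists>(S :: nat \<Rightarrow> 'a set) n.
       S 0 = carrier G \<and> S n = {\<one>\<^bsub>G\<^esub>} \<and>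
       (\<forall>i<n. subgroup (S i) G \<and> S (Suc i) \<subseteq> S i \<and>
              normal (S (Suc i)) (G\<lparr>carrier := S i\<rparr>) \<and>
              (\<exists>a\<in>S i. \<forall>g\<in>S i. \<exists>k::int. g \<in> S (Suc i) #>\<^bsub>G\<^esub> (a [^]\<^bsub>G\<^esub> k))) \<and>
       card {i. i < n \<and> infinite (rcosets\<^bsub>G\<lparr>carrier := S i\<rparr>\<^esub> (S (Suc i)))} = h)"

fun basis_word :: "('a, 'b) monoid_scheme \<Rightarrow> (nat \<Rightarrow> 'a) \<Rightarrow> (nat \<Rightarrow> int) \<Rightarrow> nat \<Rightarrow> 'a" where
  "basis_word G x l 0 = \<one>\<^bsub>G\<^esub>"
| "basis_word G x l (Suc n) = basis_word G x l n \<otimes>\<^bsub>G\<^esub> (x (Suc n) [^]\<^bsub>G\<^esub> l (Suc n))"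

end

(* Write T j for the set of words x_j^(l_j) ... x_h^(l_h). By downward induction on j each T j is a
   normal subgroup of G: the commutator condition makes x_j central modulo T (j+1), and then
   T j = <x_j> T (j+1) is normal.  Hence right multiplication of a word p x_j^c r (r in T (j+1))
   by x_j^(-q_j m) in H only conjugates r, and turns the j-th exponent into c mod q_j while keeping
   the earlier ones; doing this for j = 1, ..., h moves any g inside gH into X.  Conversely, if two
   elements of X in the same coset first differ at index j, with exponents a and b, then the quotient
   of the two lies in H and has exponents 0 before j and b - a at j; uniqueness of normal forms makes
   q_j divide b - a, which is impossible for 0 <= a, b < q_j unless a = b. *)

theory Submission
  imports Defs
begin

(* Keep [i..<Suc j] from being unfolded at its end; lists are split at the head instead. *)
declare upt_Suc [simp del]

definition ordered_word :: "('a, 'b) monoid_scheme \<Rightarrow> (nat \<Rightarrow> 'a) \<Rightarrow> (nat \<Rightarrow> int) \<Rightarrow> nat list \<Rightarrow> 'a"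
  where "ordered_word G x l js = foldr (\<lambda>i w. x i [^]\<^bsub>G\<^esub> l i \<otimes>\<^bsub>G\<^esub> w) js \<one>\<^bsub>G\<^esub>"

definition tail_words :: "('a, 'b) monoid_scheme \<Rightarrow> (nat \<Rightarrow> 'a) \<Rightarrow> nat \<Rightarrow> nat \<Rightarrow> 'a set"
  where "tail_words G x j h = {ordered_word G x l [j..<Suc h] | l. True}"

definition scaled_words :: "('a, 'b) monoid_scheme \<Rightarrow> (nat \<Rightarrow> 'a) \<Rightarrow> (nat \<Rightarrow> int) \<Rightarrow> nat \<Rightarrow> 'a set"
  where "scaled_words G x q h = {basis_word G x (\<lambda>i. q i * l i) h | l. True}"

definition box_words :: "('a, 'b) monoid_scheme \<Rightarrow> (nat \<Rightarrow> 'a) \<Rightarrow> (nat \<Rightarrow> int) \<Rightarrow> nat \<Rightarrow> 'a set"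
  where "box_words G x q h = {basis_word G x k h | k. \<forall>i\<in>{1..h}. 0 \<le> k i \<and> k i < q i}"

lemma ordered_word_Nil [simp]: "ordered_word G x l [] = \<one>\<^bsub>G\<^esub>"
  by (simp add: ordered_word_def)

lemma ordered_word_Cons [simp]:
  "ordered_word G x l (i # js) = x i [^]\<^bsub>G\<^esub> l i \<otimes>\<^bsub>G\<^esub> ordered_word G x l js"
  by (simp add: ordered_word_def)

lemma basis_word_cong:
  "(\<And>i. 1 \<le> i \<Longrightarrow> i \<le> n \<Longrightarrow> l i = l' i) \<Longrightarrow> basis_word G x l n = basis_word G x l' n"
  by (induction n) auto

context group
begin

lemma inv_m_cancel [simp]: "a \<in> carrier G \<Longrightarrow> b \<in> carrier G \<Longrightarrow> inv a \<otimes> (a \<otimes> b) = b"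
  by (simp flip: m_assoc)

lemma m_inv_cancel [simp]: "a \<in> carrier G \<Longrightarrow> b \<in> carrier G \<Longrightarrow> a \<otimes> (inv a \<otimes> b) = b"
  by (simp flip: m_assoc)

lemma gcomm_swap: "a \<in> carrier G \<Longrightarrow> b \<in> carrier G \<Longrightarrow> gcomm G b a = inv (gcomm G a b)"
  by (simp add: gcomm_def inv_mult_group m_assoc)

lemma gcomm_self: "a \<in> carrier G \<Longrightarrow> gcomm G a a = \<one>"
  by (simp add: gcomm_def m_assoc flip: inv_mult_group)

lemma gcomm_mult_right:
  assumes "a \<in> carrier G" "g \<in> carrier G" "k \<in> carrier G"
  shows "gcomm G a (g \<otimes> k) = gcomm G a k \<otimes> (inv k \<otimes> gcomm G a g \<otimes> k)"
  using assms by (simp add: gcomm_def inv_mult_group m_assoc inv_solve_left')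

lemma gcomm_inv_right:
  assumes "a \<in> carrier G" "g \<in> carrier G"
  shows "gcomm G a (inv g) = g \<otimes> inv (gcomm G a g) \<otimes> inv g"
  using assms by (simp add: gcomm_def inv_mult_group m_assoc)

lemma int_pow_conj:
  assumes "g \<in> carrier G" "a \<in> carrier G"
  shows "(g \<otimes> a \<otimes> inv g) [^] (m::int) = g \<otimes> a [^] m \<otimes> inv g"
proof -
  have "(\<lambda>y. g \<otimes> y \<otimes> inv g) \<in> hom G G"
    using assms by (intro homI) (simp_all add: m_assoc inv_solve_left')
  from hom_int_pow[OF this assms(2) is_group is_group] show ?thesis by simp
qed

lemma subgroup_gcomm_in_normal:
  assumes N: "N \<lhd> G" and a: "a \<in> carrier G"
  shows "subgroup {g \<in> carrier G. gcomm G a g \<in> N} G"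
proof (rule subgroupI)
  interpret N: normal N G by (rule N)
  show "{g \<in> carrier G. gcomm G a g \<in> N} \<noteq> {}"
    using a by (auto intro!: exI[of _ \<one>] simp: gcomm_def)
  fix g assume "g \<in> {g \<in> carrier G. gcomm G a g \<in> N}"
  then show "inv g \<in> {g \<in> carrier G. gcomm G a g \<in> N}"
    using a by (simp add: gcomm_inv_right N.inv_op_closed2)
next
  interpret N: normal N G by (rule N)
  fix g k assume "g \<in> {g \<in> carrier G. gcomm G a g \<in> N}" "k \<in> {g \<in> carrier G. gcomm G a g \<in> N}"
  then show "g \<otimes> k \<in> {g \<in> carrier G. gcomm G a g \<in> N}"
    using a by (simp add: gcomm_mult_right N.inv_op_closed1)
qed auto

lemma gcomm_in_normal_if_generators:
  assumes "N \<lhd> G" "a \<in> carrier G" "generate G B = carrier G" "\<forall>b\<in>B. gcomm G a b \<in> N"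
    and "g \<in> carrier G"
  shows "gcomm G a g \<in> N"
proof -
  have "B \<subseteq> {g \<in> carrier G. gcomm G a g \<in> N}"
    using assms(3,4) generate.incl[of _ B G] by auto
  then have "generate G B \<subseteq> {g \<in> carrier G. gcomm G a g \<in> N}"
    using assms(1,2) by (intro generate_subgroup_incl subgroup_gcomm_in_normal)
  then show ?thesis using assms by auto
qed

lemma powers_times_normal_is_normal:
  assumes N: "N \<lhd> G" and a: "a \<in> carrier G" and central: "\<forall>g\<in>carrier G. gcomm G a g \<in> N"
  shows "{a [^] (m::int) \<otimes> n | m n. n \<in> N} \<lhd> G" (is "?S \<lhd> G")
proof -
  interpret N: normal N G by (rule N)
  have S_intro: "a [^] (m::int) \<otimes> n \<in> ?S" if "n \<in> N" for m n
    using that by blast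
  have S_elim: "\<exists>m n. y = a [^] (m::int) \<otimes> n \<and> n \<in> N" if "y \<in> ?S" for y
    using that by blast
  have subgroup: "subgroup ?S G"
  proof (rule subgroupI)
    show "?S \<subseteq> carrier G" using a by auto
    show "?S \<noteq> {}" using S_intro[OF N.one_closed] by blast
  next
    fix y assume "y \<in> ?S"
    then obtain m n where y: "y = a [^] (m::int) \<otimes> n" and n: "n \<in> N" using S_elim by blast
    have "inv y = a [^] (- m) \<otimes> (a [^] m \<otimes> inv n \<otimes> inv (a [^] m))"
      using a n by (simp add: y inv_mult_group int_pow_neg m_assoc)
    moreover have "a [^] m \<otimes> inv n \<otimes> inv (a [^] m) \<in> N"
      using a n by (simp add: N.inv_op_closed2)
    ultimately show "inv y \<in> ?S" using S_intro by simp
  next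
    fix y z assume "y \<in> ?S" "z \<in> ?S"
    then obtain m n m' n' where y: "y = a [^] (m::int) \<otimes> n" and n: "n \<in> N"
      and z: "z = a [^] (m'::int) \<otimes> n'" and n': "n' \<in> N" using S_elim by meson
    have "y \<otimes> z = a [^] (m + m') \<otimes> (inv (a [^] m') \<otimes> n \<otimes> a [^] m' \<otimes> n')"
      using a n n' unfolding y z int_pow_mult[OF a] by (simp add: m_assoc)
    moreover have "inv (a [^] m') \<otimes> n \<otimes> a [^] m' \<otimes> n' \<in> N"
      using a n n' by (simp add: N.inv_op_closed1)
    ultimately show "y \<otimes> z \<in> ?S" using S_intro by simp
  qed
  show ?thesis
  proof (rule normal_invI[OF subgroup])
    fix g y assume g: "g \<in> carrier G" and "y \<in> ?S"
    then obtain m n where y: "y = a [^] (m::int) \<otimes> n" and n: "n \<in> N" using S_elim by blast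
    have "g \<otimes> a \<otimes> inv g = a [^] (1::int) \<otimes> gcomm G a (inv g)"
      using a g by (simp add: gcomm_def m_assoc)
    then have "g \<otimes> a \<otimes> inv g \<in> ?S"
      using S_intro central g by simp
    then have "(g \<otimes> a \<otimes> inv g) [^] m \<in> ?S"
      by (rule subgroup_int_pow_closed[OF subgroup])
    then have "g \<otimes> a [^] m \<otimes> inv g \<in> ?S"
      unfolding int_pow_conj[OF g a] .
    moreover have "g \<otimes> n \<otimes> inv g \<in> ?S"
      using S_intro[of _ 0] N.inv_op_closed2[OF g n] a g n by simp
    moreover have "g \<otimes> y \<otimes> inv g = (g \<otimes> a [^] m \<otimes> inv g) \<otimes> (g \<otimes> n \<otimes> inv g)"
      using a g n by (simp add: y m_assoc)
    ultimately show "g \<otimes> y \<otimes> inv g \<in> ?S"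
      using subgroup.m_closed[OF subgroup] by simp
  qed
qed

lemma ordered_word_closed [intro, simp]:
  "x ` set js \<subseteq> carrier G \<Longrightarrow> ordered_word G x l js \<in> carrier G"
  by (induction js) auto

lemma ordered_word_append:
  assumes "x ` set js \<subseteq> carrier G" "x ` set ks \<subseteq> carrier G"
  shows "ordered_word G x l (js @ ks) = ordered_word G x l js \<otimes> ordered_word G x l ks"
  using assms by (induction js) (auto simp: m_assoc)

lemma ordered_word_cong:
  "(\<And>i. i \<in> set js \<Longrightarrow> l i = l' i) \<Longrightarrow> ordered_word G x l js = ordered_word G x l' js"
  by (induction js) auto

lemma ordered_word_zero: "(\<And>i. i \<in> set js \<Longrightarrow> l i = 0) \<Longrightarrow> ordered_word G x l js = \<one>"
  by (induction js) auto

lemma ordered_word_single: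
  assumes "distinct js" "k \<in> set js" "x k \<in> carrier G" "\<And>i. i \<in> set js \<Longrightarrow> i \<noteq> k \<Longrightarrow> l i = 0"
  shows "ordered_word G x l js = x k [^] l k"
  using assms
proof (induction js)
  case (Cons i js)
  show ?case
  proof (cases "i = k")
    case True
    then have "ordered_word G x l js = \<one>"
      using Cons.prems by (intro ordered_word_zero) auto
    then show ?thesis using True Cons.prems by simp
  next
    case False
    then show ?thesis using Cons by simp
  qed
qed simp

lemma basis_word_closed [intro, simp]:
  "\<forall>i\<in>{1..n}. x i \<in> carrier G \<Longrightarrow> basis_word G x l n \<in> carrier G"
  by (induction n) auto

lemma basis_word_zero: "basis_word G x (\<lambda>_. 0) n = \<one>"
  by (induction n) auto

lemma basis_word_eq_ordered_word:
  "\<forall>i\<in>{1..n}. x i \<in> carrier G \<Longrightarrow> basis_word G x l n = ordered_word G x l [1..<Suc n]"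
proof (induction n)
  case (Suc n)
  have x: "x ` set [1..<Suc n] \<subseteq> carrier G" "x ` set [Suc n] \<subseteq> carrier G"
    using Suc.prems by auto
  have "ordered_word G x l [1..<Suc (Suc n)] = ordered_word G x l ([1..<Suc n] @ [Suc n])"
    by (simp add: upt_Suc_append)
  also have "\<dots> = basis_word G x l n \<otimes> x (Suc n) [^] l (Suc n)"
    using Suc x by (simp add: ordered_word_append)
  finally show ?case by simp
qed simp

context
  fixes x :: "nat \<Rightarrow> 'a" and h :: nat
  assumes x_carrier: "\<forall>i\<in>{1..h}. x i \<in> carrier G"
begin

lemma tail_words_eq_powers_times:
  assumes "j \<le> h"
  shows "tail_words G x j h = {x j [^] (m::int) \<otimes> t | m t. t \<in> tail_words G x (Suc j) h}"
proof (intro equalityI subsetI)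
  fix y assume "y \<in> tail_words G x j h"
  then obtain l where "y = ordered_word G x l [j..<Suc h]" by (auto simp: tail_words_def)
  then have "y = x j [^] l j \<otimes> ordered_word G x l [Suc j..<Suc h]"
    using assms by (simp add: upt_conv_Cons)
  then show "y \<in> {x j [^] (m::int) \<otimes> t | m t. t \<in> tail_words G x (Suc j) h}"
    by (auto simp: tail_words_def)
next
  fix y assume "y \<in> {x j [^] (m::int) \<otimes> t | m t. t \<in> tail_words G x (Suc j) h}"
  then obtain m l where y: "y = x j [^] (m::int) \<otimes> ordered_word G x l [Suc j..<Suc h]"
    by (auto simp: tail_words_def)
  have "ordered_word G x (l(j := m)) [Suc j..<Suc h] = ordered_word G x l [Suc j..<Suc h]"
    by (rule ordered_word_cong) simp
  then have "y = ordered_word G x (l(j := m)) [j..<Suc h]"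
    using assms by (simp add: y upt_conv_Cons)
  then show "y \<in> tail_words G x j h" by (auto simp: tail_words_def)
qed

lemma basis_in_tail_words:
  assumes "1 \<le> j" "j \<le> k" "k \<le> h"
  shows "x k \<in> tail_words G x j h"
proof -
  let ?l = "\<lambda>i. if i = k then 1 else 0 :: int"
  have "ordered_word G x ?l [j..<Suc h] = x k [^] ?l k"
    using assms x_carrier by (intro ordered_word_single[where k = k and l = ?l]) auto
  then have "x k = ordered_word G x ?l [j..<Suc h]"
    using assms x_carrier by simp
  then show ?thesis by (auto simp: tail_words_def)
qed

lemma gcomm_basis_in_generate_tail:
  assumes comm: "\<forall>i j. 1 \<le> i \<and> i < j \<and> j \<le> h \<longrightarrow> gcomm G (x i) (x j) \<in> generate G (x ` {j+1..h})"
    and "i \<in> {1..h}" "j \<in> {1..h}"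
  shows "gcomm G (x j) (x i) \<in> generate G (x ` {Suc j..h})"
proof -
  have xij: "x i \<in> carrier G" "x j \<in> carrier G" and sub: "x ` {Suc j..h} \<subseteq> carrier G"
    using assms x_carrier by auto
  consider "i < j" | "i = j" | "j < i" by linarith
  then show ?thesis
  proof cases
    case 1
    then have "gcomm G (x i) (x j) \<in> generate G (x ` {Suc j..h})" using comm assms by auto
    then show ?thesis by (simp add: gcomm_swap[OF xij] generate_m_inv_closed[OF sub])
  next
    case 2
    then show ?thesis by (simp add: gcomm_self xij generate.one)
  next
    case 3
    then have "gcomm G (x j) (x i) \<in> generate G (x ` {Suc i..h})" using comm assms by auto
    moreover have "generate G (x ` {Suc i..h}) \<subseteq> generate G (x ` {Suc j..h})"
      using 3 by (intro mono_generate) auto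
    ultimately show ?thesis by (rule rev_subsetD)
  qed
qed

lemma tail_words_normal:
  assumes gen: "generate G (x ` {1..h}) = carrier G"
    and comm: "\<forall>i j. 1 \<le> i \<and> i < j \<and> j \<le> h \<longrightarrow> gcomm G (x i) (x j) \<in> generate G (x ` {j+1..h})"
    and "1 \<le> j" "j \<le> Suc h"
  shows "tail_words G x j h \<lhd> G"
  using assms(4,3)
proof (induction j rule: inc_induct)
  case base
  have "tail_words G x (Suc h) h = {\<one>}" by (auto simp: tail_words_def)
  then show ?case by (simp add: one_is_normal)
next
  case (step n)
  interpret N: normal "tail_words G x (Suc n) h" G using step.IH by simp
  have xn: "x n \<in> carrier G" using step x_carrier by simp
  have "generate G (x ` {Suc n..h}) \<subseteq> tail_words G x (Suc n) h"
    using step basis_in_tail_words by (intro generate_subgroup_incl N.subgroup_axioms) auto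
  then have "\<forall>b\<in>x ` {1..h}. gcomm G (x n) b \<in> tail_words G x (Suc n) h"
    using gcomm_basis_in_generate_tail[OF comm] step by auto
  then have central: "\<forall>g\<in>carrier G. gcomm G (x n) g \<in> tail_words G x (Suc n) h"
    using gcomm_in_normal_if_generators[OF N.normal_axioms xn gen] by blast
  have "n \<le> h" using step by simp
  show ?case
    unfolding tail_words_eq_powers_times[OF \<open>n \<le> h\<close>]
    by (rule powers_times_normal_is_normal[OF N.normal_axioms xn central])
qed

lemma basis_word_single:
  assumes "j \<in> {1..h}" "\<And>i. i \<in> {1..h} \<Longrightarrow> i \<noteq> j \<Longrightarrow> l i = 0"
  shows "basis_word G x l h = x j [^] l j"
  unfolding basis_word_eq_ordered_word[OF x_carrier]
  by (rule ordered_word_single) (use assms x_carrier in auto)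

lemma basis_word_split:
  assumes "j < h"
  shows "basis_word G x k h
    = basis_word G x k j \<otimes> x (Suc j) [^] k (Suc j) \<otimes> ordered_word G x k [Suc (Suc j)..<Suc h]"
proof -
  have upt: "[1..<Suc h] = [1..<Suc j] @ Suc j # [Suc (Suc j)..<Suc h]"
    using upt_add_eq_append[of 1 "Suc j" "h - j"] assms by (simp add: upt_conv_Cons)
  have x_prefix: "\<forall>i\<in>{1..j}. x i \<in> carrier G" using x_carrier assms by auto
  have "x ` set [1..<Suc j] \<subseteq> carrier G" "x ` set (Suc j # [Suc (Suc j)..<Suc h]) \<subseteq> carrier G"
    "x ` set [Suc (Suc j)..<Suc h] \<subseteq> carrier G"
    using x_carrier assms by auto
  then show ?thesis
    unfolding basis_word_eq_ordered_word[OF x_carrier] basis_word_eq_ordered_word[OF x_prefix] upt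
    by (simp add: ordered_word_append m_assoc)
qed

lemma basis_word_splice:
  assumes "j < h" "t \<in> tail_words G x (Suc (Suc j)) h"
  shows "\<exists>k'. basis_word G x k j \<otimes> x (Suc j) [^] m \<otimes> t = basis_word G x k' h
    \<and> (\<forall>i\<le>j. k' i = k i) \<and> k' (Suc j) = m"
proof -
  obtain l where t: "t = ordered_word G x l [Suc (Suc j)..<Suc h]"
    using assms(2) by (auto simp: tail_words_def)
  define k' where "k' i = (if i \<le> j then k i else if i = Suc j then m else l i)" for i
  have "basis_word G x k' j = basis_word G x k j"
    by (rule basis_word_cong) (simp add: k'_def)
  moreover have "ordered_word G x k' [Suc (Suc j)..<Suc h] = t"
    unfolding t by (rule ordered_word_cong) (simp add: k'_def)
  ultimately show ?thesis
    using basis_word_split[OF assms(1), of k'] by (intro exI[of _ k']) (simp add: k'_def)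
qed

context
  fixes q :: "nat \<Rightarrow> int"
  assumes tails_normal: "\<And>j. 1 \<le> j \<Longrightarrow> j \<le> Suc h \<Longrightarrow> tail_words G x j h \<lhd> G"
    and q_pos: "\<forall>i\<in>{1..h}. q i > 0"
    and scaled_subgroup: "subgroup (scaled_words G x q h) G"
begin

lemma exists_scaled_word_reducing_prefix:
  assumes "j \<le> h"
  shows "\<exists>\<eta>\<in>scaled_words G x q h. \<exists>k. basis_word G x l h \<otimes> \<eta> = basis_word G x k h
    \<and> (\<forall>i\<in>{1..j}. 0 \<le> k i \<and> k i < q i)"
  using assms
proof (induction j)
  case 0
  have "basis_word G x l h \<otimes> \<one> = basis_word G x l h" using x_carrier by simp
  then show ?case using subgroup.one_closed[OF scaled_subgroup] by auto
next
  case (Suc j)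
  then have j: "j < h" by simp
  from Suc obtain \<eta> k where \<eta>: "\<eta> \<in> scaled_words G x q h"
    and gk: "basis_word G x l h \<otimes> \<eta> = basis_word G x k h"
    and reduced: "\<forall>i\<in>{1..j}. 0 \<le> k i \<and> k i < q i" by auto
  interpret N: normal "tail_words G x (Suc (Suc j)) h" G using tails_normal j by simp
  define c where "c = k (Suc j)"
  define Q where "Q = q (Suc j)"
  define Y where "Y = x (Suc j) [^] (Q * (c div Q))"
  define r where "r = ordered_word G x k [Suc (Suc j)..<Suc h]"
  have xj: "x (Suc j) \<in> carrier G" using x_carrier j by simp
  have carrier: "basis_word G x k j \<in> carrier G" "r \<in> carrier G" "Y \<in> carrier G" "\<eta> \<in> carrier G"
    using x_carrier j \<eta> subgroup.subset[OF scaled_subgroup] by (auto simp: r_def Y_def)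
  have "basis_word G x (\<lambda>i. q i * (if i = Suc j then - (c div Q) else 0)) h = inv Y"
    using j xj by (subst basis_word_single[of "Suc j"]) (auto simp: Y_def Q_def int_pow_neg)
  then have Y_inv: "inv Y \<in> scaled_words G x q h"
    unfolding scaled_words_def by (intro CollectI exI[of _ "\<lambda>i. if i = Suc j then - (c div Q) else 0"]) simp
  have "basis_word G x l h \<otimes> (\<eta> \<otimes> inv Y) = basis_word G x k h \<otimes> inv Y"
    using x_carrier carrier by (simp add: m_assoc flip: gk)
  also have "\<dots> = basis_word G x k j \<otimes> (x (Suc j) [^] c \<otimes> inv Y) \<otimes> (Y \<otimes> r \<otimes> inv Y)"
    using xj carrier by (simp add: basis_word_split[OF j, of k] c_def r_def m_assoc)
  also have "x (Suc j) [^] c \<otimes> inv Y = x (Suc j) [^] (c mod Q)"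
    using xj by (simp add: Y_def minus_mult_div_eq_mod flip: int_pow_diff)
  finally have "basis_word G x l h \<otimes> (\<eta> \<otimes> inv Y)
      = basis_word G x k j \<otimes> x (Suc j) [^] (c mod Q) \<otimes> (Y \<otimes> r \<otimes> inv Y)" .
  moreover have "Y \<otimes> r \<otimes> inv Y \<in> tail_words G x (Suc (Suc j)) h"
    using carrier by (intro N.inv_op_closed2) (auto simp: r_def tail_words_def)
  ultimately obtain k' where k': "basis_word G x l h \<otimes> (\<eta> \<otimes> inv Y) = basis_word G x k' h"
    "\<forall>i\<le>j. k' i = k i" "k' (Suc j) = c mod Q"
    using basis_word_splice[OF j] by metis
  have "0 < Q" using q_pos j by (simp add: Q_def)
  then have "\<forall>i\<in>{1..Suc j}. 0 \<le> k' i \<and> k' i < q i"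
    using k'(2,3) reduced by (auto simp: Q_def le_Suc_eq)
  moreover have "\<eta> \<otimes> inv Y \<in> scaled_words G x q h"
    using subgroup.m_closed[OF scaled_subgroup \<eta> Y_inv] .
  ultimately show ?case using k'(1) by blast
qed

lemma box_words_eq_if_scaled_quotient:
  assumes uniq: "\<forall>l l'. basis_word G x l h = basis_word G x l' h \<longrightarrow> (\<forall>i\<in>{1..h}. l i = l' i)"
    and k: "\<forall>i\<in>{1..h}. 0 \<le> k i \<and> k i < q i" and k': "\<forall>i\<in>{1..h}. 0 \<le> k' i \<and> k' i < q i"
    and quotient: "inv (basis_word G x k h) \<otimes> basis_word G x k' h \<in> scaled_words G x q h"
  shows "basis_word G x k h = basis_word G x k' h"
proof -
  have "\<forall>i\<in>{1..j}. k i = k' i" if "j \<le> h" for j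
    using that
  proof (induction j)
    case (Suc j)
    then have j: "j < h" and agree: "\<forall>i\<in>{1..j}. k i = k' i" by auto
    interpret N: normal "tail_words G x (Suc (Suc j)) h" G using tails_normal j by simp
    define a where "a = k (Suc j)"
    define b where "b = k' (Suc j)"
    define D where "D = x (Suc j) [^] (b - a)"
    define r where "r = ordered_word G x k [Suc (Suc j)..<Suc h]"
    define r' where "r' = ordered_word G x k' [Suc (Suc j)..<Suc h]"
    have xj: "x (Suc j) \<in> carrier G" using x_carrier j by simp
    have carrier: "basis_word G x k j \<in> carrier G" "r \<in> carrier G" "r' \<in> carrier G"
      using x_carrier j by (auto simp: r_def r'_def)
    have D_eq: "D = inv (x (Suc j) [^] a) \<otimes> x (Suc j) [^] b"
      unfolding D_def diff_conv_add_uminus add.commute[of b] int_pow_mult[OF xj] int_pow_neg[OF xj] ..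
    have "basis_word G x k' j = basis_word G x k j"
      using agree by (intro basis_word_cong) auto
    then have "inv (basis_word G x k h) \<otimes> basis_word G x k' h
        = inv r \<otimes> (inv (x (Suc j) [^] a) \<otimes> (x (Suc j) [^] b \<otimes> r'))"
      using xj carrier
      by (simp add: basis_word_split[OF j, of k] basis_word_split[OF j, of k'] a_def b_def r_def r'_def
          inv_mult_group m_assoc)
    also have "\<dots> = basis_word G x (\<lambda>_. 0) j \<otimes> D \<otimes> (inv D \<otimes> inv r \<otimes> D \<otimes> r')"
      using xj carrier by (simp add: D_eq basis_word_zero inv_mult_group m_assoc)
    finally have quotient_eq: "inv (basis_word G x k h) \<otimes> basis_word G x k' h
        = basis_word G x (\<lambda>_. 0) j \<otimes> x (Suc j) [^] (b - a) \<otimes> (inv D \<otimes> inv r \<otimes> D \<otimes> r')"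
      by (simp add: D_def)
    have "inv D \<otimes> inv r \<otimes> D \<otimes> r' \<in> tail_words G x (Suc (Suc j)) h"
      using xj carrier
      by (intro N.m_closed N.inv_op_closed1 N.m_inv_closed) (auto simp: D_def r_def r'_def tail_words_def)
    then obtain k'' where k'': "inv (basis_word G x k h) \<otimes> basis_word G x k' h = basis_word G x k'' h"
      "k'' (Suc j) = b - a"
      using basis_word_splice[OF j] quotient_eq by metis
    obtain L where "basis_word G x k'' h = basis_word G x (\<lambda>i. q i * L i) h"
      using quotient k''(1) by (auto simp: scaled_words_def)
    then have "k'' (Suc j) = q (Suc j) * L (Suc j)"
      using uniq j by (metis atLeastAtMost_iff Suc_leI le_add1 plus_1_eq_Suc)
    then have "q (Suc j) dvd b - a"
      using k''(2) by simp
    moreover have "0 \<le> a" "a < q (Suc j)" "0 \<le> b" "b < q (Suc j)"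
      using k k' j by (auto simp: a_def b_def)
    ultimately have "a = b"
      by (metis mod_eq_dvd_iff mod_pos_pos_trivial)
    then show ?case using agree by (auto simp: a_def b_def le_Suc_eq)
  qed simp
  then show ?thesis by (intro basis_word_cong) auto
qed

lemma box_words_transversal:
  assumes ex_rep: "\<forall>g\<in>carrier G. \<exists>l. g = basis_word G x l h"
    and uniq_rep: "\<forall>l l'. basis_word G x l h = basis_word G x l' h \<longrightarrow> (\<forall>i\<in>{1..h}. l i = l' i)"
    and g: "g \<in> carrier G"
  shows "\<exists>!y. y \<in> box_words G x q h \<and> y \<in> g <# scaled_words G x q h"
proof -
  obtain l where "g = basis_word G x l h" using ex_rep g by blast
  then obtain \<eta> k where \<eta>: "\<eta> \<in> scaled_words G x q h" and gk: "g \<otimes> \<eta> = basis_word G x k h"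
    and k: "\<forall>i\<in>{1..h}. 0 \<le> k i \<and> k i < q i"
    using exists_scaled_word_reducing_prefix[OF order_refl] by blast
  show ?thesis
  proof (rule ex1I)
    show "g \<otimes> \<eta> \<in> box_words G x q h \<and> g \<otimes> \<eta> \<in> g <# scaled_words G x q h"
      using gk k \<eta> unfolding l_coset_def box_words_def by blast
  next
    fix y assume y: "y \<in> box_words G x q h \<and> y \<in> g <# scaled_words G x q h"
    then obtain k' where y_eq: "y = basis_word G x k' h" and k': "\<forall>i\<in>{1..h}. 0 \<le> k' i \<and> k' i < q i"
      by (auto simp: box_words_def)
    have "inv g \<otimes> y \<in> scaled_words G x q h"
      using subgroup.lcos_module_imp[OF scaled_subgroup is_group g] y by simp
    then have "inv \<eta> \<otimes> (inv g \<otimes> y) \<in> scaled_words G x q h"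
      using \<eta> scaled_subgroup by (simp add: subgroup.m_closed subgroup.m_inv_closed)
    then have "inv (g \<otimes> \<eta>) \<otimes> y \<in> scaled_words G x q h"
      using g \<eta> y_eq x_carrier subgroup.subset[OF scaled_subgroup] by (auto simp: inv_mult_group m_assoc)
    then show "y = g \<otimes> \<eta>"
      using box_words_eq_if_scaled_quotient[OF uniq_rep k k'] gk y_eq by simp
  qed
qed

end

end

end

theorem lemma5p5:
  fixes G :: "('a, 'b) monoid_scheme"
    and h :: nat and x :: "nat \<Rightarrow> 'a" and q :: "nat \<Rightarrow> int"
  assumes grp: "group G"
    and nil: "nilpotent_group G"
    and tf: "torsion_free G"
    and hl: "hirsch_length G h"
    and xG: "\<forall>i\<in>{1..h}. x i \<in> carrier G"
    and gen: "generate G (x ` {1..h}) = carrier G"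
    and ex_rep: "\<forall>g\<in>carrier G. \<exists>l. g = basis_word G x l h"
    and uniq_rep: "\<forall>l l'. basis_word G x l h = basis_word G x l' h \<longrightarrow> (\<forall>i\<in>{1..h}. l i = l' i)"
    and comm: "\<forall>i j. 1 \<le> i \<and> i < j \<and> j \<le> h \<longrightarrow>
                 gcomm G (x i) (x j) \<in> generate G (x ` {j+1..h})"
    and qpos: "\<forall>i\<in>{1..h}. q i > 0"
    and Hsub: "subgroup {basis_word G x (\<lambda>i. q i * l i) h | l. True} G"
  shows "\<forall>g\<in>carrier G. \<exists>!y. y \<in> {basis_word G x k h | k. \<forall>i\<in>{1..h}. 0 \<le> k i \<and> k i < q i}
            \<and> y \<in> g <#\<^bsub>G\<^esub> {basis_word G x (\<lambda>i. q i * l i) h | l. True}"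
proof -
  interpret group G by (rule grp)
  have "subgroup (scaled_words G x q h) G"
    using Hsub by (simp add: scaled_words_def)
  from box_words_transversal[OF xG tail_words_normal[OF xG gen comm] qpos this ex_rep uniq_rep]
  show ?thesis
    unfolding box_words_def scaled_words_def by blast
qed

end
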